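(* Let $(X_t)_{t\geq0}$ be the cellular automaton defined below, with initial law such that the columns $(X_0(i,\cdot))_{i\in\mathbb N}$ are i.i.d. with common law $\mu$, a probability law on $\{0,1\}^{\mathbb N}$. Then for each $n\in\mathbb N$, the columns $(X_{2n}(i,\cdot))_{i\in\mathbb N}$ are i.i.d. with common law ${\cal F}^n(\mu)$. The same holds with $(X_t)$ replaced by $(\widehat X_t)$ and ${\cal F}$ replaced by $\widehat{\cal F}$.
   Context: Here $\mathbb N=\{0,1,2,\dots\}$, and $X_t(i,\cdot):=(X_t(i,j))_{j\in\mathbb N}$. **Cellular automata.** Given a random $X_0\in\{0,1\}^{\mathbb N^2}$, for $t>0$ and $(i,j)\in\mathbb N^2$ set: - $X_t(i,j)=X_{t-1}(2i,j)\wedge X_{t-1}(2i+1,j)$ if $t$ is even; - $X_t(i,j)=X_{t-1}(i,j)\vee X_{t-1}(i,j+1)$ if $t$ is odd. $\widehat X_t$ is defined likewise from $\widehat X_0$ (with the same initial column assumption) but with the two rules interchanged: the $\wedge$-rule at odd $t$ and the $\vee$-rule at even $t$. **Column maps.** Let $S=\{0,1\}^{\mathbb N}$ and ${\cal M}$ the set of probability laws on $S$. Define $\Phi_{\rm A}(y,z)(k)=y(k)\wedge z(k)$ and $\Phi_{\rm b}(y)(k)=y(k)\vee y(k+1)$. For $\mu\in{\cal M}$, ${\cal F}_{\rm A}(\mu)$ is the law of $\Phi_{\rm A}(Y,Z)$ and ${\cal F}_{\rm b}(\mu)$ is the law of $\Phi_{\rm b}(Y)$, where $Y,Z$ are independent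 with law $\mu$. Set ${\cal F}:={\cal F}_{\rm A}\circ{\cal F}_{\rm b}$ and $\widehat{\cal F}:={\cal F}_{\rm b}\circ{\cal F}_{\rm A}$; ${\cal F}^n$ is the $n$-th iterate. *)

theory Defs
  imports "HOL-Probability.Probability"
begin

definition S_M :: "(nat \<Rightarrow> bool) measure" where
  "S_M = PiM UNIV (\<lambda>_. count_space UNIV)"

text \<open>Configurations: x i j = X(i,j); x i is the i-th column.\<close>
type_synonym config = "nat \<Rightarrow> nat \<Rightarrow> bool"

definition and_step :: "config \<Rightarrow> config" where
  "and_step x = (\<lambda>i j. x (2*i) j \<and> x (2*i+1) j)"

definition or_step :: "config \<Rightarrow> config" where
  "or_step x = (\<lambda>i j. x i j \<or> x i (Suc j))"

primrec CA :: "config \<Rightarrow> nat \<Rightarrow> config" where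
  "CA x 0 = x"
| "CA x (Suc t) = (if even (Suc t) then and_step (CA x t) else or_step (CA x t))"

primrec CA_hat :: "config \<Rightarrow> nat \<Rightarrow> config" where
  "CA_hat x 0 = x"
| "CA_hat x (Suc t) = (if odd (Suc t) then and_step (CA_hat x t) else or_step (CA_hat x t))"

definition Phi_A :: "(nat \<Rightarrow> bool) \<Rightarrow> (nat \<Rightarrow> bool) \<Rightarrow> (nat \<Rightarrow> bool)" where
  "Phi_A y z = (\<lambda>k. y k \<and> z k)"

definition Phi_b :: "(nat \<Rightarrow> bool) \<Rightarrow> (nat \<Rightarrow> bool)" where
  "Phi_b y = (\<lambda>k. y k \<or> y (Suc k))"

definition F_A :: "(nat \<Rightarrow> bool) measure \<Rightarrow> (nat \<Rightarrow> bool) measure" where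
  "F_A \<mu> = distr (\<mu> \<Otimes>\<^sub>M \<mu>) S_M (\<lambda>(y, z). Phi_A y z)"

definition F_b :: "(nat \<Rightarrow> bool) measure \<Rightarrow> (nat \<Rightarrow> bool) measure" where
  "F_b \<mu> = distr \<mu> S_M Phi_b"

definition F :: "(nat \<Rightarrow> bool) measure \<Rightarrow> (nat \<Rightarrow> bool) measure" where
  "F = F_A \<circ> F_b"

definition F_hat :: "(nat \<Rightarrow> bool) measure \<Rightarrow> (nat \<Rightarrow> bool) measure" where
  "F_hat = F_b \<circ> F_A"

end

(* A double step of either automaton acts on columns: the vee rule maps every column
   by Phi_b, and the wedge rule maps the disjoint pairs of columns (2i, 2i+1) by Phi_A.
   A measurable map applied to every member, or to every disjoint pair of members, of an
   i.i.d. sequence yields an i.i.d. sequence whose law is the image of the law, resp. of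
   its square; these images are F_b and F_A, so the claim follows by induction on n. *)
theory Submission
  imports Defs
begin

definition (in prob_space) iid_vars :: "'b measure \<Rightarrow> ('i \<Rightarrow> 'a \<Rightarrow> 'b) \<Rightarrow> 'b measure \<Rightarrow> bool"
  where "iid_vars N Y \<nu> \<longleftrightarrow> indep_vars (\<lambda>_. N) Y UNIV \<and> (\<forall>i. distr M N (Y i) = \<nu>)"

lemma (in prob_space) indep_vars_imp_indep_var:
  assumes ind: "indep_vars (\<lambda>_. N) Y I" and "i \<in> I" "j \<in> I" "i \<noteq> j"
  shows "indep_var N (Y i) N (Y j)"
proof -
  have "indep_var (PiM {i} (\<lambda>_. N)) (\<lambda>\<omega>. restrict (\<lambda>k. Y k \<omega>) {i})
      (PiM {j} (\<lambda>_. N)) (\<lambda>\<omega>. restrict (\<lambda>k. Y k \<omega>) {j})"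
    using assms by (intro indep_var_restrict[OF ind]) auto
  moreover have "(\<lambda>f. f i) \<in> PiM {i} (\<lambda>_. N) \<rightarrow>\<^sub>M N" "(\<lambda>f. f j) \<in> PiM {j} (\<lambda>_. N) \<rightarrow>\<^sub>M N"
    by measurable
  ultimately have "indep_var N ((\<lambda>f. f i) \<circ> (\<lambda>\<omega>. restrict (\<lambda>k. Y k \<omega>) {i}))
      N ((\<lambda>f. f j) \<circ> (\<lambda>\<omega>. restrict (\<lambda>k. Y k \<omega>) {j}))"
    by (rule indep_var_compose)
  then show ?thesis
    by (simp add: comp_def)
qed

lemma (in prob_space) iid_vars_compose:
  assumes iid: "iid_vars N Y \<nu>" and f: "f \<in> N \<rightarrow>\<^sub>M N'"
  shows "iid_vars N' (\<lambda>i \<omega>. f (Y i \<omega>)) (distr \<nu> N' f)"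
  unfolding iid_vars_def
proof
  show "indep_vars (\<lambda>_. N') (\<lambda>i \<omega>. f (Y i \<omega>)) UNIV"
    using iid indep_vars_compose2[of "\<lambda>_. N" Y UNIV "\<lambda>_. f" "\<lambda>_. N'"] f
    by (simp add: iid_vars_def)
  show "\<forall>i. distr M N' (\<lambda>\<omega>. f (Y i \<omega>)) = distr \<nu> N' f"
  proof
    fix i
    have rv: "Y i \<in> M \<rightarrow>\<^sub>M N" and law: "distr M N (Y i) = \<nu>"
      using iid by (auto simp: iid_vars_def indep_vars_def)
    show "distr M N' (\<lambda>\<omega>. f (Y i \<omega>)) = distr \<nu> N' f"
      using distr_distr[OF f rv] law by (simp add: comp_def)
  qed
qed

lemma (in prob_space) iid_vars_pair_compose:
  fixes Y :: "nat \<Rightarrow> 'a \<Rightarrow> 'b"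
  assumes iid: "iid_vars N Y \<nu>" and g: "g \<in> N \<Otimes>\<^sub>M N \<rightarrow>\<^sub>M N'"
  shows "iid_vars N' (\<lambda>i \<omega>. g (Y (2*i) \<omega>, Y (2*i+1) \<omega>)) (distr (\<nu> \<Otimes>\<^sub>M \<nu>) N' g)"
  unfolding iid_vars_def
proof
  have ind: "indep_vars (\<lambda>_. N) Y UNIV" and law: "\<And>i. distr M N (Y i) = \<nu>"
    using iid by (auto simp: iid_vars_def)
  have "indep_vars (\<lambda>j. PiM {2*j, 2*j+1} (\<lambda>_. N))
      (\<lambda>j \<omega>. restrict (\<lambda>i. Y i \<omega>) {2*j, 2*j+1}) UNIV"
    by (rule indep_vars_restrict[OF ind]) (auto simp: disjoint_family_on_def)
  moreover have "(\<lambda>r. g (r (2*j), r (2*j+1))) \<in> PiM {2*j, 2*j+1} (\<lambda>_. N) \<rightarrow>\<^sub>M N'" for j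
    using g by measurable
  ultimately have "indep_vars (\<lambda>_. N')
      (\<lambda>j \<omega>. (\<lambda>r. g (r (2*j), r (2*j+1))) (restrict (\<lambda>i. Y i \<omega>) {2*j, 2*j+1})) UNIV"
    by (rule indep_vars_compose2)
  then show "indep_vars (\<lambda>_. N') (\<lambda>i \<omega>. g (Y (2*i) \<omega>, Y (2*i+1) \<omega>)) UNIV"
    by simp
  show "\<forall>i. distr M N' (\<lambda>\<omega>. g (Y (2*i) \<omega>, Y (2*i+1) \<omega>)) = distr (\<nu> \<Otimes>\<^sub>M \<nu>) N' g"
  proof
    fix i :: nat
    have "indep_var N (Y (2*i)) N (Y (2*i+1))"
      using ind by (rule indep_vars_imp_indep_var) auto
    then have square: "\<nu> \<Otimes>\<^sub>M \<nu> = distr M (N \<Otimes>\<^sub>M N) (\<lambda>\<omega>. (Y (2*i) \<omega>, Y (2*i+1) \<omega>))"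
      by (simp add: indep_var_distribution_eq law)
    have "Y k \<in> M \<rightarrow>\<^sub>M N" for k
      using ind by (simp add: indep_vars_def)
    then have rv: "(\<lambda>\<omega>. (Y (2*i) \<omega>, Y (2*i+1) \<omega>)) \<in> M \<rightarrow>\<^sub>M N \<Otimes>\<^sub>M N"
      by (intro measurable_Pair)
    show "distr M N' (\<lambda>\<omega>. g (Y (2*i) \<omega>, Y (2*i+1) \<omega>)) = distr (\<nu> \<Otimes>\<^sub>M \<nu>) N' g"
      using distr_distr[OF g rv] square by (simp add: comp_def)
  qed
qed

lemma measurable_into_S_M:
  assumes "\<And>k. Measurable.pred M (\<lambda>x. f x k)"
  shows "f \<in> M \<rightarrow>\<^sub>M S_M"
  using measurable_PiM_single'[of UNIV "\<lambda>k x. f x k" M "\<lambda>_. count_space UNIV"] assms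
  by (simp add: S_M_def)

lemma pred_S_M_component [measurable]: "Measurable.pred S_M (\<lambda>y. y k)"
  unfolding S_M_def by measurable

lemma Phi_b_measurable: "Phi_b \<in> S_M \<rightarrow>\<^sub>M S_M"
  unfolding Phi_b_def by (rule measurable_into_S_M) measurable

lemma Phi_A_measurable: "(\<lambda>(y, z). Phi_A y z) \<in> S_M \<Otimes>\<^sub>M S_M \<rightarrow>\<^sub>M S_M"
  unfolding Phi_A_def split_beta' by (rule measurable_into_S_M) measurable

lemma (in prob_space) iid_vars_F_b:
  assumes "iid_vars S_M Y \<nu>"
  shows "iid_vars S_M (\<lambda>i \<omega>. Phi_b (Y i \<omega>)) (F_b \<nu>)"
  unfolding F_b_def using assms Phi_b_measurable by (rule iid_vars_compose)

lemma (in prob_space) iid_vars_F_A: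
  fixes Y :: "nat \<Rightarrow> 'a \<Rightarrow> nat \<Rightarrow> bool"
  assumes "iid_vars S_M Y \<nu>"
  shows "iid_vars S_M (\<lambda>i \<omega>. Phi_A (Y (2*i) \<omega>) (Y (2*i+1) \<omega>)) (F_A \<nu>)"
  using iid_vars_pair_compose[OF assms Phi_A_measurable] by (simp add: F_A_def)

lemma F_apply: "F \<nu> = F_A (F_b \<nu>)"
  by (simp add: F_def)

lemma F_hat_apply: "F_hat \<nu> = F_b (F_A \<nu>)"
  by (simp add: F_hat_def)

lemma CA_double_step:
  "CA x (2 * Suc n) i = Phi_A (Phi_b (CA x (2*n) (2*i))) (Phi_b (CA x (2*n) (2*i+1)))"
  by (simp add: and_step_def or_step_def Phi_A_def Phi_b_def)

lemma CA_hat_double_step: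
  "CA_hat x (2 * Suc n) i = Phi_b (Phi_A (CA_hat x (2*n) (2*i)) (CA_hat x (2*n) (2*i+1)))"
  by (simp add: and_step_def or_step_def Phi_A_def Phi_b_def)

theorem lemma16:
  fixes P :: "'w measure" and X0 :: "'w \<Rightarrow> config" and \<mu> :: "(nat \<Rightarrow> bool) measure"
  assumes "prob_space P"
    and "prob_space \<mu>" and "sets \<mu> = sets S_M"
    and "prob_space.indep_vars P (\<lambda>_. S_M) (\<lambda>i \<omega>. X0 \<omega> i) UNIV"
    and "\<And>i. distr P S_M (\<lambda>\<omega>. X0 \<omega> i) = \<mu>"
  shows "\<forall>n. (prob_space.indep_vars P (\<lambda>_. S_M) (\<lambda>i \<omega>. CA (X0 \<omega>) (2*n) i) UNIV
              \<and> (\<forall>i. distr P S_M (\<lambda>\<omega>. CA (X0 \<omega>) (2*n) i) = (F ^^ n) \<mu>))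
           \<and> (prob_space.indep_vars P (\<lambda>_. S_M) (\<lambda>i \<omega>. CA_hat (X0 \<omega>) (2*n) i) UNIV
              \<and> (\<forall>i. distr P S_M (\<lambda>\<omega>. CA_hat (X0 \<omega>) (2*n) i) = (F_hat ^^ n) \<mu>))"
proof -
  interpret prob_space P by fact
  have "iid_vars S_M (\<lambda>i \<omega>. CA (X0 \<omega>) (2*n) i) ((F ^^ n) \<mu>)
      \<and> iid_vars S_M (\<lambda>i \<omega>. CA_hat (X0 \<omega>) (2*n) i) ((F_hat ^^ n) \<mu>)" for n
  proof (induction n)
    case 0
    show ?case using assms(4,5) by (simp add: iid_vars_def)
  next
    case (Suc n)
    have "iid_vars S_M (\<lambda>i \<omega>. CA (X0 \<omega>) (2 * Suc n) i) ((F ^^ Suc n) \<mu>)"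
      using iid_vars_F_A[OF iid_vars_F_b[OF Suc[THEN conjunct1]]]
      by (simp only: CA_double_step funpow.simps comp_apply F_apply[of "(F ^^ n) \<mu>"])
    moreover have "iid_vars S_M (\<lambda>i \<omega>. CA_hat (X0 \<omega>) (2 * Suc n) i) ((F_hat ^^ Suc n) \<mu>)"
      using iid_vars_F_b[OF iid_vars_F_A[OF Suc[THEN conjunct2]]]
      by (simp only: CA_hat_double_step funpow.simps comp_apply F_hat_apply[of "(F_hat ^^ n) \<mu>"])
    ultimately show ?case ..
  qed
  then show ?thesis by (simp add: iid_vars_def)
qed

end
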